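(* Let $0<a\le1$ and $z_1,z_2\in\mathbb{C}$ with $0<|z_1|,|z_2|\le 1$. For $\vec\sigma=(\sigma_1,\sigma_2)$ with $\sigma_1>0$, $\sigma_2>1$, $\sigma_1+\sigma_2>2$ and $\vec t=(t_1,t_2)\in\mathbb{R}^2$ put $$f_{\vec\sigma,a,\vec z}(\vec t):=\Gamma(\sigma_1+{\rm i}t_1)\Gamma(\sigma_2+{\rm i}t_2)\,\Phi_2(\sigma_1+{\rm i}t_1,\sigma_2+{\rm i}t_2,a,z_1,z_2),\qquad F_{\vec\sigma,a,\vec z}(\vec t):=\frac{f_{\vec\sigma,a,\vec z}(\vec t)}{f_{\vec\sigma,a,\vec z}(\vec 0)}.$$ Then $F_{\vec\sigma,a,\vec z}$ is the characteristic function of a probability measure on $\mathbb{R}^2$ for all $\sigma_1>0$, $\sigma_2>1$, $\sigma_1+\sigma_2>2$ if and only if $z_1,z_2\in[-1,1]$ (both nonzero). Moreover, in that case the associated probability measure is absolutely continuous with density $$P_{\vec\sigma,a,\vec z}(\eta,\theta)=\frac{e^{\sigma_1\eta}e^{\sigma_2\theta}\exp\bigl((1-a)(e^\eta+e^\theta)\bigr)}{f_{\vec\sigma,a,\vec z}(\vec0)\,(\exp(e^\theta)-z_2)\,(\exp(e^\eta+e^\theta)-z_1)},\qquad \eta,\theta\in\mathbb{R}.$$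
   Context: For $0<a\le1$, $s_1,s_2\in\mathbb{C}$ and $z_1,z_2\in\mathbb{C}$ with $0<|z_1|,|z_2|\le1$, the Hurwitz–Lerch type Euler–Zagier double zeta function is $$\Phi_2(s_1,s_2,a,z_1,z_2):=\sum_{m=0}^\infty\frac{z_1^m}{(m+a)^{s_1}}\sum_{n=1}^\infty\frac{z_2^{n-1}}{(m+n+a)^{s_2}},$$ which converges absolutely for $\Re s_1>0$, $\Re s_2>1$, $\Re(s_1+s_2)>2$ and continues meromorphically to $\mathbb{C}^2$. The characteristic function of a probability measure $\mu$ on $\mathbb{R}^2$ is $\int_{\mathbb{R}^2}e^{{\rm i}(t_1\eta+t_2\theta)}\mu(d\eta\,d\theta)$. *)

theory Defs
  imports "HOL-Probability.Probability"
begin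

text \<open>Hurwitz--Lerch type Euler--Zagier double zeta function, defined by its
  (iterated) series; the statement only uses it in the region of absolute convergence.\<close>
definition Phi2 :: "complex \<Rightarrow> complex \<Rightarrow> real \<Rightarrow> complex \<Rightarrow> complex \<Rightarrow> complex" where
  "Phi2 s1 s2 a z1 z2 =
     (\<Sum>m. z1 ^ m / (complex_of_real (real m + a)) powr s1 *
        (\<Sum>n. z2 ^ n / (complex_of_real (real m + real (Suc n) + a)) powr s2))"

definition f_fun :: "real \<Rightarrow> real \<Rightarrow> real \<Rightarrow> complex \<Rightarrow> complex \<Rightarrow> real \<Rightarrow> real \<Rightarrow> complex" where
  "f_fun \<sigma>1 \<sigma>2 a z1 z2 t1 t2 =
     Gamma (Complex \<sigma>1 t1) * Gamma (Complex \<sigma>2 t2) * Phi2 (Complex \<sigma>1 t1) (Complex \<sigma>2 t2) a z1 z2"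

definition F_fun :: "real \<Rightarrow> real \<Rightarrow> real \<Rightarrow> complex \<Rightarrow> complex \<Rightarrow> real \<Rightarrow> real \<Rightarrow> complex" where
  "F_fun \<sigma>1 \<sigma>2 a z1 z2 t1 t2 = f_fun \<sigma>1 \<sigma>2 a z1 z2 t1 t2 / f_fun \<sigma>1 \<sigma>2 a z1 z2 0 0"

definition char2 :: "(real \<times> real) measure \<Rightarrow> real \<Rightarrow> real \<Rightarrow> complex" where
  "char2 M t1 t2 = (LINT x|M. cis (t1 * fst x + t2 * snd x))"

definition is_char_fun2 :: "(real \<Rightarrow> real \<Rightarrow> complex) \<Rightarrow> bool" where
  "is_char_fun2 F \<longleftrightarrow> (\<exists>M. prob_space M \<and> sets M = sets (borel :: (real \<times> real) measure) \<and>
      (\<forall>t1 t2. F t1 t2 = char2 M t1 t2))"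

definition P_dens :: "real \<Rightarrow> real \<Rightarrow> real \<Rightarrow> complex \<Rightarrow> complex \<Rightarrow> real \<times> real \<Rightarrow> complex" where
  "P_dens \<sigma>1 \<sigma>2 a z1 z2 x = (let \<eta> = fst x; \<theta> = snd x in
     complex_of_real (exp (\<sigma>1 * \<eta>) * exp (\<sigma>2 * \<theta>) * exp ((1 - a) * (exp \<eta> + exp \<theta>))) /
     (f_fun \<sigma>1 \<sigma>2 a z1 z2 0 0 * (complex_of_real (exp (exp \<theta>)) - z2) *
        (complex_of_real (exp (exp \<eta> + exp \<theta>)) - z1)))"

end

theory Submission
  imports Defs
begin

(* Expanding 1 / ((exp (e^theta) - z2) (exp (e^eta + e^theta) - z1)) into a double geometric series
   and integrating term by term with  int exp (s eta) exp (-c e^eta) d eta = Gamma(s) c^(-s)  gives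
     f(t) = int K(eta, theta) exp (i (t1 eta + t2 theta)) d(eta, theta),   K = f(0) P.
   For real z1, z2 the kernel K is positive, so F is the characteristic function of the density P.
   Conversely, a characteristic function satisfies F(-t) = cnj (F t); with t = (0, -tau) this gives
     Phi2(sigma1, sigma2 + i tau, z) Phi2(sigma1, sigma2, cnj z)
       = Phi2(sigma1, sigma2 + i tau, cnj z) Phi2(sigma1, sigma2, z).
   As Re s -> oo,  Phi2(sigma1, s, z) = a^-sigma1 (1+a)^-s + c (2+a)^-s + O((3+a)^-Re s)  with
   c = z2 a^-sigma1 + z1 (1+a)^-sigma1, and comparing the identity along two vertical lines forces c
   to be real; sigma1 = 2, 3 then give Im z1 = Im z2 = 0. *)

lemma powr_of_real_pos: "0 < x \<Longrightarrow> complex_of_real x powr s = exp (s * of_real (ln x))"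
  by (simp add: powr_def Ln_of_real)

lemma norm_powr_of_real: "0 \<le> x \<Longrightarrow> norm (complex_of_real x powr s) = x powr Re s"
  by (simp add: norm_powr_real_powr)

definition gamma_kernel :: "complex \<Rightarrow> real \<Rightarrow> real \<Rightarrow> complex" where
  "gamma_kernel s c \<eta> = exp (s * of_real \<eta>) * of_real (exp (- c * exp \<eta>))"

lemma gamma_kernel_measurable [measurable]: "gamma_kernel s c \<in> borel_measurable borel"
  unfolding gamma_kernel_def by measurable

lemma gamma_kernel_substitution:
  assumes c: "0 < c"
  shows "\<bar>c * exp \<eta>\<bar> *\<^sub>R (complex_of_real (c * exp \<eta>) powr (s - 1) / of_real (exp (c * exp \<eta>))) =
    of_real c powr s * gamma_kernel s c \<eta>"
proof -
  have "0 < c * exp \<eta>" using c by simp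
  have "complex_of_real (c * exp \<eta>) = exp (of_real (ln c + \<eta>))"
    using c by (simp only: exp_of_real exp_add exp_ln)
  moreover have "complex_of_real (c * exp \<eta>) powr (s - 1) = exp ((s - 1) * of_real (ln c + \<eta>))"
    using powr_of_real_pos[OF \<open>0 < c * exp \<eta>\<close>, of "s - 1"] c by (simp add: ln_mult)
  moreover have "inverse (complex_of_real (exp (c * exp \<eta>))) = of_real (exp (- c * exp \<eta>))"
    by (simp add: exp_minus)
  ultimately have "\<bar>c * exp \<eta>\<bar> *\<^sub>R (complex_of_real (c * exp \<eta>) powr (s - 1) / of_real (exp (c * exp \<eta>))) =
      exp (of_real (ln c + \<eta>)) * exp ((s - 1) * of_real (ln c + \<eta>)) * of_real (exp (- c * exp \<eta>))"
    using \<open>0 < c * exp \<eta>\<close> by (simp only: scaleR_conv_of_real abs_of_pos divide_inverse mult.assoc)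
  also have "\<dots> = exp (s * of_real (ln c)) * (exp (s * of_real \<eta>) * of_real (exp (- c * exp \<eta>)))"
    by (simp add: exp_add[symmetric] algebra_simps)
  also have "\<dots> = of_real c powr s * gamma_kernel s c \<eta>"
    using c by (simp add: powr_of_real_pos gamma_kernel_def)
  finally show ?thesis .
qed

text \<open>Substituting \<open>t = c e\<^sup>\<eta>\<close> in Euler's integral for \<open>\<Gamma>(s)\<close>.\<close>
lemma
  assumes s: "0 < Re s" and c: "0 < c"
  shows integrable_gamma_kernel: "integrable lborel (gamma_kernel s c)"
    and integral_gamma_kernel: "integral\<^sup>L lborel (gamma_kernel s c) = Gamma s / of_real c powr s"
proof -
  define f where "f = (\<lambda>t::real. complex_of_real t powr (s - 1) / of_real (exp t))"
  define g where "g = (\<lambda>\<eta>::real. c * exp \<eta>)"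
  define C where "C = complex_of_real c powr s"
  have "C \<noteq> 0" using c by (simp add: C_def)
  have Gamma: "f absolutely_integrable_on {0<..} \<and> integral {0<..} f = Gamma s"
    using absolutely_integrable_Gamma_integral'[OF s] Gamma_integral_complex'[OF s]
    by (auto simp: f_def integral_unique)
  have g_image: "g ` UNIV = {0<..}"
  proof (intro equalityI subsetI)
    fix t :: real assume "t \<in> {0<..}"
    then have "t = g (ln (t / c))" using c by (simp add: g_def)
    then show "t \<in> g ` UNIV" by blast
  qed (use c in \<open>auto simp: g_def\<close>)
  have "\<And>\<eta>. (g has_field_derivative g \<eta>) (at \<eta> within UNIV)"
    unfolding g_def by (auto intro!: derivative_eq_intros)
  moreover have "inj_on g UNIV" using c by (auto simp: g_def inj_on_def)
  ultimately have subst: "(\<lambda>\<eta>. \<bar>g \<eta>\<bar> *\<^sub>R f (g \<eta>)) absolutely_integrable_on UNIV \<and>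
      integral UNIV (\<lambda>\<eta>. \<bar>g \<eta>\<bar> *\<^sub>R f (g \<eta>)) = Gamma s"
    using has_absolute_integral_change_of_variables_real[of UNIV g g f "Gamma s"] Gamma g_image
    by simp
  have integrand: "\<bar>g \<eta>\<bar> *\<^sub>R f (g \<eta>) = C * gamma_kernel s c \<eta>" for \<eta>
    unfolding f_def g_def C_def by (rule gamma_kernel_substitution[OF c])
  have "integrable lebesgue (\<lambda>\<eta>. C * gamma_kernel s c \<eta>)"
    using subst by (simp add: integrand set_integrable_def)
  then have "integrable lebesgue (\<lambda>\<eta>. inverse C * (C * gamma_kernel s c \<eta>))"
    by (rule integrable_mult_right)
  then have "integrable lebesgue (gamma_kernel s c)"
    using \<open>C \<noteq> 0\<close> by (simp add: mult.assoc[symmetric])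
  then show int: "integrable lborel (gamma_kernel s c)"
    by (simp add: integrable_completion[of _ lborel, symmetric])
  have "C * integral UNIV (gamma_kernel s c) = Gamma s"
    using subst by (simp add: integrand)
  then show "integral\<^sup>L lborel (gamma_kernel s c) = Gamma s / of_real c powr s"
    using integral_lborel[OF int] \<open>C \<noteq> 0\<close> by (simp add: C_def field_simps)
qed

lemma norm_gamma_kernel: "complex_of_real (norm (gamma_kernel s c \<eta>)) = gamma_kernel (Re s) c \<eta>"
  by (simp add: gamma_kernel_def norm_mult mult.commute exp_of_real flip: of_real_mult)

lemma integral_norm_gamma_kernel:
  assumes "0 < Re s" "0 < c"
  shows "(\<integral>\<eta>. norm (gamma_kernel s c \<eta>) \<partial>lborel) = Gamma (Re s) / c powr Re s"
proof -
  have "complex_of_real (\<integral>\<eta>. norm (gamma_kernel s c \<eta>) \<partial>lborel) = integral\<^sup>L lborel (gamma_kernel (Re s) c)"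
    by (simp add: norm_gamma_kernel flip: integral_complex_of_real)
  also have "\<dots> = of_real (Gamma (Re s) / c powr Re s)"
    using assms by (simp add: integral_gamma_kernel Gamma_complex_of_real powr_of_real)
  finally show ?thesis by (simp only: of_real_eq_iff)
qed

context pair_sigma_finite
begin

lemma
  fixes f :: "'a \<Rightarrow> 'c::{real_normed_field, banach, second_countable_topology}"
  assumes f: "integrable M1 f" and g: "integrable M2 g"
  shows integrable_mult_fst_snd: "integrable (M1 \<Otimes>\<^sub>M M2) (\<lambda>x. f (fst x) * g (snd x))"
    and integral_mult_fst_snd:
      "(\<integral>x. f (fst x) * g (snd x) \<partial>(M1 \<Otimes>\<^sub>M M2)) = integral\<^sup>L M1 f * integral\<^sup>L M2 g"
proof -
  have [measurable]: "f \<in> borel_measurable M1" "g \<in> borel_measurable M2"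
    using f g by (simp_all add: borel_measurable_integrable)
  show int: "integrable (M1 \<Otimes>\<^sub>M M2) (\<lambda>x. f (fst x) * g (snd x))"
  proof (rule Fubini_integrable)
    have "integrable M1 (\<lambda>x. norm (f x) * (\<integral>y. norm (g y) \<partial>M2))"
      using f by (intro integrable_mult_left) simp
    then show "integrable M1 (\<lambda>x. \<integral>y. norm (f (fst (x, y)) * g (snd (x, y))) \<partial>M2)"
      by (simp add: norm_mult)
  qed (use g in \<open>simp_all add: integrable_mult_right\<close>)
  show "(\<integral>x. f (fst x) * g (snd x) \<partial>(M1 \<Otimes>\<^sub>M M2)) = integral\<^sup>L M1 f * integral\<^sup>L M2 g"
    using integral_fst'[OF int] by simp
qed

end

lemma summable_shifted_powr:
  assumes a: "0 < a" and \<gamma>: "1 < \<gamma>"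
  shows "summable (\<lambda>m::nat. (real m + a) powr - \<gamma>)"
proof -
  define b where "b = min a 1"
  have b: "0 < b" "b \<le> a" "b \<le> 1" using a by (auto simp: b_def)
  have "summable (\<lambda>n::nat. real (Suc n) powr - \<gamma>)"
    using summable_real_powr_iff[of "- \<gamma>"] \<gamma> by (subst summable_Suc_iff) simp
  then have major: "summable (\<lambda>n::nat. b powr - \<gamma> * real (Suc n) powr - \<gamma>)"
    by (rule summable_mult)
  show ?thesis
  proof (rule summable_comparison_test'[OF major])
    fix n :: nat
    have "b * real n \<le> real n" using b by (simp add: mult_left_le_one_le)
    then have "b * real (Suc n) \<le> real n + a" using b by (simp add: algebra_simps)
    then have "(real n + a) powr - \<gamma> \<le> (b * real (Suc n)) powr - \<gamma>"
      using \<gamma> b by (intro powr_mono2') auto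
    then show "norm ((real n + a) powr - \<gamma>) \<le> b powr - \<gamma> * real (Suc n) powr - \<gamma>"
      using a b by (simp add: powr_mult)
  qed
qed

definition Phi2_term :: "complex \<Rightarrow> complex \<Rightarrow> real \<Rightarrow> complex \<Rightarrow> complex \<Rightarrow> nat \<Rightarrow> nat \<Rightarrow> complex" where
  "Phi2_term s1 s2 a z1 z2 m n =
     z1 ^ m / of_real (real m + a) powr s1 * (z2 ^ n / of_real (real m + real (Suc n) + a) powr s2)"

lemma norm_Phi2_term:
  assumes "0 < a"
  shows "norm (Phi2_term s1 s2 a z1 z2 m n) = norm z1 ^ m * norm z2 ^ n *
    ((real m + a) powr - Re s1 * (real m + real (Suc n) + a) powr - Re s2)"
proof -
  have "norm (complex_of_real (real m + a) powr s1) = (real m + a) powr Re s1"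
    and "norm (complex_of_real (real m + real (Suc n) + a) powr s2) = (real m + real (Suc n) + a) powr Re s2"
    using assms by (simp_all only: norm_powr_of_real add_pos_pos of_nat_0_le_iff less_imp_le)
  then show ?thesis
    unfolding Phi2_term_def norm_mult norm_divide norm_power by (simp add: powr_minus divide_inverse)
qed

lemma summable_Phi2_row:
  assumes "0 < a" "norm z \<le> 1" "1 < Re s"
  shows "summable (\<lambda>n. z ^ n / complex_of_real (real m + real (Suc n) + a) powr s)"
proof (rule summable_comparison_test')
  show "summable (\<lambda>n. (real m + real (Suc n) + a) powr - Re s)"
    using summable_shifted_powr[of "real m + 1 + a" "Re s"] assms by (simp add: add_ac)
  fix n
  have "norm (complex_of_real (real m + real (Suc n) + a) powr s) = (real m + real (Suc n) + a) powr Re s"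
    using assms by (simp_all only: norm_powr_of_real add_pos_pos of_nat_0_le_iff less_imp_le)
  moreover have "norm z ^ n \<le> 1" using assms by (simp add: power_le_one)
  ultimately show "norm (z ^ n / complex_of_real (real m + real (Suc n) + a) powr s) \<le>
      (real m + real (Suc n) + a) powr - Re s"
    unfolding norm_divide norm_power by (simp add: powr_minus divide_inverse mult_left_le_one_le)
qed

lemma norm_Phi2_term_le:
  assumes "0 < a" "norm z1 \<le> 1" "norm z2 \<le> 1"
  shows "norm (Phi2_term s1 s2 a z1 z2 m n) \<le>
    (real m + a) powr - Re s1 * (real m + real (Suc n) + a) powr - Re s2"
proof -
  have "norm z1 ^ m * norm z2 ^ n \<le> 1"
    using assms by (intro mult_le_one power_le_one) auto
  then show ?thesis
    unfolding norm_Phi2_term[OF \<open>0 < a\<close>] by (intro mult_left_le_one_le) auto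
qed

lemma shifted_powr_le_mult:
  assumes "0 < a" "0 \<le> \<alpha>" "0 \<le> \<beta>"
  shows "(real m + real (Suc n) + a) powr - (\<alpha> + \<beta>) \<le> (real m + a) powr - \<alpha> * real (Suc n) powr - \<beta>"
proof -
  have "(real m + real (Suc n) + a) powr - (\<alpha> + \<beta>) =
      (real m + real (Suc n) + a) powr - \<alpha> * (real m + real (Suc n) + a) powr - \<beta>"
    using assms by (simp add: powr_add[symmetric])
  also have "\<dots> \<le> (real m + a) powr - \<alpha> * real (Suc n) powr - \<beta>"
    using assms by (intro mult_mono powr_mono2') auto
  finally show ?thesis .
qed

text \<open>Split \<open>\<sigma>\<^sub>2 = \<alpha> + \<beta>\<close> with \<open>\<beta> > 1\<close> and \<open>\<sigma>\<^sub>1 + \<alpha> > 1\<close>.\<close>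
lemma
  assumes a: "0 < a" and \<sigma>: "0 < \<sigma>1" "1 < \<sigma>2" "2 < \<sigma>1 + \<sigma>2"
  shows summable_Phi2_majorant_row:
      "summable (\<lambda>n. (real m + a) powr - \<sigma>1 * (real m + real (Suc n) + a) powr - \<sigma>2)"
    and summable_Phi2_majorant:
      "summable (\<lambda>m. \<Sum>n. (real m + a) powr - \<sigma>1 * (real m + real (Suc n) + a) powr - \<sigma>2)"
proof -
  have row: "summable (\<lambda>n. (real m + real (Suc n) + a) powr - \<sigma>2)" for m
    using summable_shifted_powr[of "real m + 1 + a" \<sigma>2] a \<sigma> by (simp add: add_ac)
  then show "summable (\<lambda>n. (real m + a) powr - \<sigma>1 * (real m + real (Suc n) + a) powr - \<sigma>2)"
    by (rule summable_mult)
  define \<beta> where "\<beta> = (1 + min \<sigma>2 (\<sigma>1 + \<sigma>2 - 1)) / 2"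
  define \<alpha> where "\<alpha> = \<sigma>2 - \<beta>"
  have \<beta>: "1 < \<beta>" "\<beta> \<le> \<sigma>2" and \<alpha>: "0 \<le> \<alpha>" "1 < \<sigma>1 + \<alpha>"
    using \<sigma> by (auto simp: \<alpha>_def \<beta>_def min_def field_simps)
  define Z where "Z = (\<Sum>n::nat. real (Suc n) powr - \<beta>)"
  have Z: "summable (\<lambda>n::nat. real (Suc n) powr - \<beta>)"
    using summable_real_powr_iff[of "- \<beta>"] \<beta> by (subst summable_Suc_iff) simp
  have term_le: "(real m + real (Suc n) + a) powr - \<sigma>2 \<le> (real m + a) powr - \<alpha> * real (Suc n) powr - \<beta>"
    for m n :: nat
    using shifted_powr_le_mult[OF a \<alpha>(1), of \<beta> m n] \<beta> by (simp add: \<alpha>_def)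
  have row_le: "(\<Sum>n. (real m + a) powr - \<sigma>1 * (real m + real (Suc n) + a) powr - \<sigma>2) \<le>
      Z * (real m + a) powr - (\<sigma>1 + \<alpha>)" for m :: nat
  proof -
    have "(\<Sum>n. (real m + real (Suc n) + a) powr - \<sigma>2) \<le> (\<Sum>n. (real m + a) powr - \<alpha> * real (Suc n) powr - \<beta>)"
      by (intro suminf_le term_le row summable_mult Z)
    also have "\<dots> = (real m + a) powr - \<alpha> * Z"
      unfolding Z_def by (rule suminf_mult[OF Z])
    finally have "(real m + a) powr - \<sigma>1 * (\<Sum>n. (real m + real (Suc n) + a) powr - \<sigma>2) \<le>
        (real m + a) powr - \<sigma>1 * ((real m + a) powr - \<alpha> * Z)"
      by (intro mult_left_mono) auto
    also have "\<dots> = Z * (real m + a) powr - (\<sigma>1 + \<alpha>)"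
      using a by (simp add: powr_add[symmetric] algebra_simps)
    finally show ?thesis
      by (simp only: suminf_mult[OF row])
  qed
  show "summable (\<lambda>m. \<Sum>n. (real m + a) powr - \<sigma>1 * (real m + real (Suc n) + a) powr - \<sigma>2)"
  proof (rule summable_comparison_test'[OF summable_mult[OF summable_shifted_powr[OF a \<alpha>(2)]]])
    fix m :: nat
    have "0 \<le> (\<Sum>n. (real m + a) powr - \<sigma>1 * (real m + real (Suc n) + a) powr - \<sigma>2)"
      by (intro suminf_nonneg summable_mult row) auto
    then show "norm (\<Sum>n. (real m + a) powr - \<sigma>1 * (real m + real (Suc n) + a) powr - \<sigma>2) \<le>
        Z * (real m + a) powr - (\<sigma>1 + \<alpha>)"
      using row_le by simp
  qed
qed

lemma
  fixes t :: "nat \<Rightarrow> nat \<Rightarrow> 'a::banach"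
  assumes le: "\<And>m n. norm (t m n) \<le> b m n"
    and row: "\<And>m. summable (b m)" and rows: "summable (\<lambda>m. \<Sum>n. b m n)"
  shows summable_double_suminf: "summable (\<lambda>m. \<Sum>n. t m n)"
    and norm_double_suminf_le: "norm (\<Sum>m. \<Sum>n. t m n) \<le> (\<Sum>m. \<Sum>n. b m n)"
proof -
  have norm_row: "summable (\<lambda>n. norm (t m n))" for m
    using le by (intro summable_comparison_test'[OF row[of m]]) simp
  have row_le: "norm (\<Sum>n. t m n) \<le> (\<Sum>n. b m n)" for m
    by (rule order_trans[OF summable_norm[OF norm_row] suminf_le[OF le norm_row row]])
  have norm_summable: "summable (\<lambda>m. norm (\<Sum>n. t m n))"
    by (rule summable_comparison_test'[OF rows]) (simp add: row_le)
  then show "summable (\<lambda>m. \<Sum>n. t m n)"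
    by (rule summable_norm_cancel)
  show "norm (\<Sum>m. \<Sum>n. t m n) \<le> (\<Sum>m. \<Sum>n. b m n)"
    by (rule order_trans[OF summable_norm[OF norm_summable] suminf_le[OF row_le norm_summable rows]])
qed

lemma
  assumes a: "0 < a" and z: "norm z1 \<le> 1" "norm z2 \<le> 1"
    and s: "0 < Re s1" "1 < Re s2" "2 < Re s1 + Re s2"
  shows summable_norm_Phi2_term: "summable (\<lambda>n. norm (Phi2_term s1 s2 a z1 z2 m n))"
    and summable_suminf_norm_Phi2_term: "summable (\<lambda>m. \<Sum>n. norm (Phi2_term s1 s2 a z1 z2 m n))"
proof -
  note le = norm_Phi2_term_le[OF a z]
  note row = summable_Phi2_majorant_row[OF a s]
  show inner: "summable (\<lambda>n. norm (Phi2_term s1 s2 a z1 z2 m n))" for m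
    using le by (intro summable_comparison_test'[OF row[where m = m]]) simp
  show "summable (\<lambda>m. \<Sum>n. norm (Phi2_term s1 s2 a z1 z2 m n))"
  proof (rule summable_comparison_test'[OF summable_Phi2_majorant[OF a s]])
    fix m
    have "0 \<le> (\<Sum>n. norm (Phi2_term s1 s2 a z1 z2 m n))"
      by (intro suminf_nonneg inner) simp
    then show "norm (\<Sum>n. norm (Phi2_term s1 s2 a z1 z2 m n)) \<le>
        (\<Sum>n. (real m + a) powr - Re s1 * (real m + real (Suc n) + a) powr - Re s2)"
      using suminf_le[OF le inner row] by simp
  qed
qed

lemma Phi2_eq_double_suminf:
  assumes a: "0 < a" and z: "norm z1 \<le> 1" "norm z2 \<le> 1"
    and s: "0 < Re s1" "1 < Re s2" "2 < Re s1 + Re s2"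
  shows "Phi2 s1 s2 a z1 z2 = (\<Sum>m. \<Sum>n. Phi2_term s1 s2 a z1 z2 m n)"
  unfolding Phi2_def Phi2_term_def by (simp only: suminf_mult[OF summable_Phi2_row[OF a z(2) s(2)]])

lemma cnj_suminf: "summable f \<Longrightarrow> cnj (suminf f) = (\<Sum>n. cnj (f n))"
  by (metis sums_cnj summable_sums sums_unique)

lemma cnj_Phi2:
  assumes a: "0 < a" and z: "norm z1 \<le> 1" "norm z2 \<le> 1"
    and s: "0 < Re s1" "1 < Re s2" "2 < Re s1 + Re s2"
  shows "cnj (Phi2 s1 s2 a z1 z2) = Phi2 (cnj s1) (cnj s2) a (cnj z1) (cnj z2)"
proof -
  have cnj_term: "cnj (Phi2_term s1 s2 a z1 z2 m n) = Phi2_term (cnj s1) (cnj s2) a (cnj z1) (cnj z2) m n"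
    for m n using a by (simp add: Phi2_term_def cnj_powr)
  note inner = summable_norm_cancel[OF summable_norm_Phi2_term[OF assms]]
  have "cnj (Phi2 s1 s2 a z1 z2) = (\<Sum>m. \<Sum>n. cnj (Phi2_term s1 s2 a z1 z2 m n))"
    unfolding Phi2_eq_double_suminf[OF assms]
    by (simp add: cnj_suminf summable_double_suminf[OF order_refl] summable_norm_Phi2_term
        summable_suminf_norm_Phi2_term inner assms)
  also have "\<dots> = Phi2 (cnj s1) (cnj s2) a (cnj z1) (cnj z2)"
    using assms by (simp add: cnj_term Phi2_eq_double_suminf)
  finally show ?thesis .
qed

definition Phi2_kernel :: "complex \<Rightarrow> complex \<Rightarrow> real \<Rightarrow> complex \<Rightarrow> complex \<Rightarrow> real \<times> real \<Rightarrow> complex" where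
  "Phi2_kernel s1 s2 a z1 z2 x = exp (s1 * of_real (fst x)) * exp (s2 * of_real (snd x)) *
     of_real (exp ((1 - a) * (exp (fst x) + exp (snd x)))) /
     ((of_real (exp (exp (snd x))) - z2) * (of_real (exp (exp (fst x) + exp (snd x))) - z1))"

definition Phi2_kernel_term ::
    "complex \<Rightarrow> complex \<Rightarrow> real \<Rightarrow> complex \<Rightarrow> complex \<Rightarrow> nat \<Rightarrow> nat \<Rightarrow> real \<times> real \<Rightarrow> complex" where
  "Phi2_kernel_term s1 s2 a z1 z2 m n x = z1 ^ m * z2 ^ n *
     (gamma_kernel s1 (real m + a) (fst x) * gamma_kernel s2 (real m + real (Suc n) + a) (snd x))"

lemma double_geometric_series:
  fixes q1 q2 :: "'a::{real_normed_field, banach}"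
  assumes q: "norm q1 < 1" "norm q2 < 1"
  shows "summable (\<lambda>n. norm (B * q1 ^ m * q2 ^ n))"
    and "summable (\<lambda>m. \<Sum>n. norm (B * q1 ^ m * q2 ^ n))"
    and "(\<Sum>m. \<Sum>n. B * q1 ^ m * q2 ^ n) = B / ((1 - q1) * (1 - q2))"
proof -
  have norm_row: "(\<lambda>n. norm (B * q1 ^ m * q2 ^ n)) sums (norm B / (1 - norm q2) * norm q1 ^ m)" for m
    using sums_mult[OF geometric_sums[of "norm q2"], of "norm B * norm q1 ^ m"] q
    by (simp add: norm_mult norm_power divide_inverse mult_ac)
  then show "summable (\<lambda>n. norm (B * q1 ^ m * q2 ^ n))" by (rule sums_summable)
  have "summable (\<lambda>m. norm B / (1 - norm q2) * norm q1 ^ m)"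
    using q by (intro summable_mult summable_geometric) simp
  then show "summable (\<lambda>m. \<Sum>n. norm (B * q1 ^ m * q2 ^ n))"
    using norm_row by (simp add: sums_iff)
  have "(\<lambda>n. B * q1 ^ m * q2 ^ n) sums (B / (1 - q2) * q1 ^ m)" for m
    using sums_mult[OF geometric_sums[OF q(2)], of "B * q1 ^ m"] by (simp add: divide_inverse mult_ac)
  moreover have "(\<lambda>m. B / (1 - q2) * q1 ^ m) sums (B / ((1 - q1) * (1 - q2)))"
    using sums_mult[OF geometric_sums[OF q(1)], of "B / (1 - q2)"] by (simp add: divide_inverse mult_ac)
  ultimately show "(\<Sum>m. \<Sum>n. B * q1 ^ m * q2 ^ n) = B / ((1 - q1) * (1 - q2))"
    by (simp add: sums_iff)
qed

lemma of_real_exp_minus_eq: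
  "complex_of_real (exp t) - z = of_real (exp t) * (1 - z * of_real (exp (- t)))"
proof -
  have "complex_of_real (exp t) * of_real (exp (- t)) = 1"
    by (simp flip: of_real_mult exp_add)
  then show ?thesis by (simp add: algebra_simps)
qed

text \<open>With \<open>u = e\<^sup>\<eta>\<close>, \<open>v = e\<^sup>\<theta>\<close>, the kernel is \<open>B / ((1 - q\<^sub>1)(1 - q\<^sub>2))\<close> and the
  \<open>(m, n)\<close>-th term is \<open>B q\<^sub>1\<^sup>m q\<^sub>2\<^sup>n\<close>, where \<open>q\<^sub>1 = z\<^sub>1 e\<^sup>-\<^sup>u\<^sup>-\<^sup>v\<close> and \<open>q\<^sub>2 = z\<^sub>2 e\<^sup>-\<^sup>v\<close>.\<close>
lemma Phi2_kernel_double_geometric: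
  assumes z: "norm z1 \<le> 1" "norm z2 \<le> 1"
  shows "summable (\<lambda>n. norm (Phi2_kernel_term s1 s2 a z1 z2 m n x))"
    and "summable (\<lambda>m. \<Sum>n. norm (Phi2_kernel_term s1 s2 a z1 z2 m n x))"
    and "Phi2_kernel s1 s2 a z1 z2 x = (\<Sum>m. \<Sum>n. Phi2_kernel_term s1 s2 a z1 z2 m n x)"
proof -
  define u v where "u = exp (fst x)" and "v = exp (snd x)"
  define B where "B = exp (s1 * of_real (fst x)) * exp (s2 * of_real (snd x)) *
     complex_of_real (exp (- a * u - (1 + a) * v))"
  define q1 q2 where "q1 = z1 * of_real (exp (- (u + v)))" and "q2 = z2 * of_real (exp (- v))"
  have "0 < u" "0 < v" by (simp_all add: u_def v_def)
  have "exp (- (u + v)) < 1" "exp (- v) < 1"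
    using \<open>0 < u\<close> \<open>0 < v\<close> by simp_all
  then have q: "norm q1 < 1" "norm q2 < 1"
    using z by (auto simp: q1_def q2_def norm_mult intro: le_less_trans[OF mult_left_le_one_le])
  have "exp (- (real m + a) * u) * exp (- (real m + real (Suc n) + a) * v) =
      exp (- a * u - (1 + a) * v) * exp (- (u + v)) ^ m * exp (- v) ^ n" for m n
    by (simp add: exp_add[symmetric] algebra_simps flip: exp_of_nat_mult)
  then have term_eq: "Phi2_kernel_term s1 s2 a z1 z2 m n x = B * q1 ^ m * q2 ^ n" for m n
    unfolding Phi2_kernel_term_def gamma_kernel_def B_def q1_def q2_def u_def v_def
    by (simp add: power_mult_distrib mult_ac flip: of_real_mult of_real_power)
  have "Phi2_kernel s1 s2 a z1 z2 x = B / ((1 - q1) * (1 - q2))"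
  proof -
    have "exp ((1 - a) * (u + v)) = exp (- a * u - (1 + a) * v) * exp v * exp (u + v)"
      by (simp add: exp_add[symmetric] algebra_simps)
    then have "Phi2_kernel s1 s2 a z1 z2 x = exp (s1 * of_real (fst x)) * exp (s2 * of_real (snd x)) *
        of_real (exp (- a * u - (1 + a) * v) * exp v * exp (u + v)) /
        ((of_real (exp v) * (1 - q2)) * (of_real (exp (u + v)) * (1 - q1)))"
      unfolding Phi2_kernel_def q1_def q2_def of_real_exp_minus_eq u_def[symmetric] v_def[symmetric] by simp
    also have "\<dots> = (of_real (exp v) * of_real (exp (u + v))) * B /
        ((of_real (exp v) * of_real (exp (u + v))) * ((1 - q1) * (1 - q2)))"
      unfolding B_def by (simp only: of_real_mult mult_ac)
    also have "\<dots> = B / ((1 - q1) * (1 - q2))"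
      by (rule mult_divide_mult_cancel_left) simp
    finally show ?thesis .
  qed
  then show "Phi2_kernel s1 s2 a z1 z2 x = (\<Sum>m. \<Sum>n. Phi2_kernel_term s1 s2 a z1 z2 m n x)"
    by (simp add: term_eq double_geometric_series[OF q])
  show "summable (\<lambda>n. norm (Phi2_kernel_term s1 s2 a z1 z2 m n x))"
    and "summable (\<lambda>m. \<Sum>n. norm (Phi2_kernel_term s1 s2 a z1 z2 m n x))"
    by (simp_all add: term_eq double_geometric_series[OF q])
qed

lemma Phi2_kernel_term_measurable [measurable]:
  "Phi2_kernel_term s1 s2 a z1 z2 m n \<in> borel_measurable borel"
  unfolding Phi2_kernel_term_def[abs_def] borel_prod[symmetric] by measurable

lemma
  assumes s: "0 < Re s1" "0 < Re s2" and a: "0 < a"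
  shows integrable_Phi2_kernel_term: "integrable lborel (Phi2_kernel_term s1 s2 a z1 z2 m n)"
    and integral_Phi2_kernel_term:
      "integral\<^sup>L lborel (Phi2_kernel_term s1 s2 a z1 z2 m n) = Gamma s1 * Gamma s2 * Phi2_term s1 s2 a z1 z2 m n"
    and integral_norm_Phi2_kernel_term:
      "(\<integral>x. norm (Phi2_kernel_term s1 s2 a z1 z2 m n x) \<partial>lborel) =
         Gamma (Re s1) * Gamma (Re s2) * norm (Phi2_term s1 s2 a z1 z2 m n)"
proof -
  have c: "0 < real m + a" "0 < real m + real (Suc n) + a" using a by simp_all
  note int1 = integrable_gamma_kernel[OF s(1) c(1)] and int2 = integrable_gamma_kernel[OF s(2) c(2)]
  note prod = lborel_pair.integrable_mult_fst_snd lborel_pair.integral_mult_fst_snd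
  note prod_int = prod(1)[OF int1 int2, unfolded lborel_prod]
  show "integrable lborel (Phi2_kernel_term s1 s2 a z1 z2 m n)"
    unfolding Phi2_kernel_term_def[abs_def] by (intro integrable_mult_right prod_int)
  show "integral\<^sup>L lborel (Phi2_kernel_term s1 s2 a z1 z2 m n) = Gamma s1 * Gamma s2 * Phi2_term s1 s2 a z1 z2 m n"
    unfolding Phi2_kernel_term_def[abs_def] integral_mult_right_zero
      prod(2)[OF int1 int2, unfolded lborel_prod]
    using s c by (simp add: integral_gamma_kernel Phi2_term_def)
  have "(\<integral>x. norm (Phi2_kernel_term s1 s2 a z1 z2 m n x) \<partial>lborel) =
      norm z1 ^ m * norm z2 ^ n * ((\<integral>\<eta>. norm (gamma_kernel s1 (real m + a) \<eta>) \<partial>lborel) *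
        (\<integral>\<theta>. norm (gamma_kernel s2 (real m + real (Suc n) + a) \<theta>) \<partial>lborel))"
    unfolding Phi2_kernel_term_def norm_mult norm_power integral_mult_right_zero
      prod(2)[OF integrable_norm[OF int1] integrable_norm[OF int2], unfolded lborel_prod] ..
  also have "\<dots> = Gamma (Re s1) * Gamma (Re s2) * norm (Phi2_term s1 s2 a z1 z2 m n)"
    using s c by (simp add: integral_norm_gamma_kernel norm_Phi2_term[OF a] powr_minus divide_inverse)
  finally show "(\<integral>x. norm (Phi2_kernel_term s1 s2 a z1 z2 m n x) \<partial>lborel) =
      Gamma (Re s1) * Gamma (Re s2) * norm (Phi2_term s1 s2 a z1 z2 m n)" .
qed

lemma
  fixes g :: "nat \<Rightarrow> nat \<Rightarrow> 'a \<Rightarrow> 'b::{banach, second_countable_topology}"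
  assumes int: "\<And>m n. integrable M (g m n)"
    and row: "\<And>m x. summable (\<lambda>n. norm (g m n x))"
    and rows: "\<And>x. summable (\<lambda>m. \<Sum>n. norm (g m n x))"
    and int_row: "\<And>m. summable (\<lambda>n. \<integral>x. norm (g m n x) \<partial>M)"
    and int_rows: "summable (\<lambda>m. \<Sum>n. \<integral>x. norm (g m n x) \<partial>M)"
  shows integrable_double_suminf: "integrable M (\<lambda>x. \<Sum>m. \<Sum>n. g m n x)"
    and integral_double_suminf: "(\<integral>x. (\<Sum>m. \<Sum>n. g m n x) \<partial>M) = (\<Sum>m. \<Sum>n. integral\<^sup>L M (g m n))"
proof -
  define G where "G m = (\<lambda>x. \<Sum>n. g m n x)" for m
  have G_int: "integrable M (G m)" and G_integral: "integral\<^sup>L M (G m) = (\<Sum>n. integral\<^sup>L M (g m n))" for m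
    unfolding G_def by (intro integrable_suminf integral_suminf AE_I2 int row int_row)+
  have norm_G_le: "norm (G m x) \<le> (\<Sum>n. norm (g m n x))" for m x
    unfolding G_def by (rule summable_norm[OF row])
  have "(\<integral>x. norm (G m x) \<partial>M) \<le> (\<integral>x. (\<Sum>n. norm (g m n x)) \<partial>M)" for m
    using int row int_row
    by (intro integral_mono norm_G_le integrable_norm G_int integrable_suminf AE_I2) auto
  also have "(\<integral>x. (\<Sum>n. norm (g m n x)) \<partial>M) = (\<Sum>n. \<integral>x. norm (g m n x) \<partial>M)" for m
    using int row int_row by (intro integral_suminf AE_I2) auto
  finally have int_G_le: "(\<integral>x. norm (G m x) \<partial>M) \<le> (\<Sum>n. \<integral>x. norm (g m n x) \<partial>M)" for m .
  have G_summable: "summable (\<lambda>m. norm (G m x))" for x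
    by (rule summable_comparison_test'[OF rows]) (use norm_G_le in simp)
  have int_G_summable: "summable (\<lambda>m. \<integral>x. norm (G m x) \<partial>M)"
    by (rule summable_comparison_test'[OF int_rows]) (use int_G_le in simp)
  show "integrable M (\<lambda>x. \<Sum>m. \<Sum>n. g m n x)"
    using integrable_suminf[OF G_int AE_I2[OF G_summable] int_G_summable] by (simp add: G_def)
  have "(\<integral>x. (\<Sum>m. \<Sum>n. g m n x) \<partial>M) = (\<Sum>m. integral\<^sup>L M (G m))"
    using integral_suminf[OF G_int AE_I2[OF G_summable] int_G_summable] by (simp add: G_def)
  then show "(\<integral>x. (\<Sum>m. \<Sum>n. g m n x) \<partial>M) = (\<Sum>m. \<Sum>n. integral\<^sup>L M (g m n))"
    by (simp only: G_integral)
qed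

theorem
  assumes a: "0 < a" and z: "norm z1 \<le> 1" "norm z2 \<le> 1"
    and s: "0 < Re s1" "1 < Re s2" "2 < Re s1 + Re s2"
  shows integrable_Phi2_kernel: "integrable lborel (Phi2_kernel s1 s2 a z1 z2)"
    and integral_Phi2_kernel: "integral\<^sup>L lborel (Phi2_kernel s1 s2 a z1 z2) = Gamma s1 * Gamma s2 * Phi2 s1 s2 a z1 z2"
proof -
  have s2: "0 < Re s2" using s by simp
  note geometric = Phi2_kernel_double_geometric[OF z, of s1 s2 a]
  have kernel_eq: "Phi2_kernel s1 s2 a z1 z2 = (\<lambda>x. \<Sum>m. \<Sum>n. Phi2_kernel_term s1 s2 a z1 z2 m n x)"
    using geometric(3) by blast
  note row = summable_norm_Phi2_term[OF assms] and rows = summable_suminf_norm_Phi2_term[OF assms]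
  have int_row: "summable (\<lambda>n. \<integral>x. norm (Phi2_kernel_term s1 s2 a z1 z2 m n x) \<partial>lborel)" for m
    unfolding integral_norm_Phi2_kernel_term[OF s(1) s2 a] mult.assoc by (intro summable_mult row)
  have int_rows: "summable (\<lambda>m. \<Sum>n. \<integral>x. norm (Phi2_kernel_term s1 s2 a z1 z2 m n x) \<partial>lborel)"
    unfolding integral_norm_Phi2_kernel_term[OF s(1) s2 a] suminf_mult[OF row]
    by (intro summable_mult rows)
  note double = integrable_double_suminf integral_double_suminf
  note double = double[OF integrable_Phi2_kernel_term[OF s(1) s2 a] geometric(1,2) int_row int_rows]
  show "integrable lborel (Phi2_kernel s1 s2 a z1 z2)"
    unfolding kernel_eq by (rule double(1))
  have "integral\<^sup>L lborel (Phi2_kernel s1 s2 a z1 z2) =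
      (\<Sum>m. \<Sum>n. Gamma s1 * Gamma s2 * Phi2_term s1 s2 a z1 z2 m n)"
    unfolding kernel_eq double(2) integral_Phi2_kernel_term[OF s(1) s2 a] ..
  also have "\<dots> = Gamma s1 * Gamma s2 * Phi2 s1 s2 a z1 z2"
    using summable_norm_cancel[OF row] summable_double_suminf[OF order_refl row rows]
    by (simp add: suminf_mult Phi2_eq_double_suminf[OF assms])
  finally show "integral\<^sup>L lborel (Phi2_kernel s1 s2 a z1 z2) = Gamma s1 * Gamma s2 * Phi2 s1 s2 a z1 z2" .
qed

lemma exp_Complex_mult_of_real:
  "exp (Complex \<sigma> t * of_real y) = of_real (exp (\<sigma> * y)) * cis (t * y)"
  by (subst exp_eq_polar) simp

lemma exp_of_real_mult_of_real: "exp (complex_of_real \<sigma> * of_real y) = of_real (exp (\<sigma> * y))"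
  by (simp flip: of_real_mult exp_of_real)

lemma Phi2_kernel_Complex:
  "Phi2_kernel (Complex \<sigma>1 t1) (Complex \<sigma>2 t2) a z1 z2 x =
     Phi2_kernel (of_real \<sigma>1) (of_real \<sigma>2) a z1 z2 x * cis (t1 * fst x + t2 * snd x)"
  unfolding Phi2_kernel_def exp_Complex_mult_of_real exp_of_real_mult_of_real
  by (simp add: distrib_left mult_ac flip: cis_mult)

lemma
  assumes a: "0 < a" and z: "norm z1 \<le> 1" "norm z2 \<le> 1" and \<sigma>: "0 < \<sigma>1" "1 < \<sigma>2" "2 < \<sigma>1 + \<sigma>2"
  shows integrable_Phi2_kernel_cis:
      "integrable lborel (\<lambda>x. Phi2_kernel (of_real \<sigma>1) (of_real \<sigma>2) a z1 z2 x * cis (t1 * fst x + t2 * snd x))"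
    and f_fun_eq_integral:
      "f_fun \<sigma>1 \<sigma>2 a z1 z2 t1 t2 =
         (\<integral>x. Phi2_kernel (of_real \<sigma>1) (of_real \<sigma>2) a z1 z2 x * cis (t1 * fst x + t2 * snd x) \<partial>lborel)"
proof -
  have "Phi2_kernel (Complex \<sigma>1 t1) (Complex \<sigma>2 t2) a z1 z2 =
      (\<lambda>x. Phi2_kernel (of_real \<sigma>1) (of_real \<sigma>2) a z1 z2 x * cis (t1 * fst x + t2 * snd x))"
    by (rule ext) (rule Phi2_kernel_Complex)
  then show "integrable lborel (\<lambda>x. Phi2_kernel (of_real \<sigma>1) (of_real \<sigma>2) a z1 z2 x * cis (t1 * fst x + t2 * snd x))"
    and "f_fun \<sigma>1 \<sigma>2 a z1 z2 t1 t2 =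
      (\<integral>x. Phi2_kernel (of_real \<sigma>1) (of_real \<sigma>2) a z1 z2 x * cis (t1 * fst x + t2 * snd x) \<partial>lborel)"
    using integrable_Phi2_kernel[OF a z, of "Complex \<sigma>1 t1" "Complex \<sigma>2 t2"]
      integral_Phi2_kernel[OF a z, of "Complex \<sigma>1 t1" "Complex \<sigma>2 t2"] \<sigma>
    by (simp_all add: f_fun_def)
qed

lemma P_dens_eq_Phi2_kernel:
  "P_dens \<sigma>1 \<sigma>2 a z1 z2 x = Phi2_kernel (of_real \<sigma>1) (of_real \<sigma>2) a z1 z2 x / f_fun \<sigma>1 \<sigma>2 a z1 z2 0 0"
  by (simp add: P_dens_def Phi2_kernel_def Let_def exp_of_real_mult_of_real mult_ac)

lemma Phi2_kernel_real_pos: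
  assumes "z1 \<in> \<real>" "z2 \<in> \<real>" "norm z1 \<le> 1" "norm z2 \<le> 1"
  shows "Phi2_kernel (of_real \<sigma>1) (of_real \<sigma>2) a z1 z2 x = of_real (Re (Phi2_kernel (of_real \<sigma>1) (of_real \<sigma>2) a z1 z2 x))"
    and "0 < Re (Phi2_kernel (of_real \<sigma>1) (of_real \<sigma>2) a z1 z2 x)"
proof -
  obtain r1 r2 where r: "z1 = of_real r1" "z2 = of_real r2" "r1 \<le> 1" "r2 \<le> 1"
    using assms by (auto elim!: Reals_cases)
  define k where "k = exp (\<sigma>1 * fst x) * exp (\<sigma>2 * snd x) * exp ((1 - a) * (exp (fst x) + exp (snd x))) /
     ((exp (exp (snd x)) - r2) * (exp (exp (fst x) + exp (snd x)) - r1))"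
  have "1 < exp (exp (snd x))" "1 < exp (exp (fst x) + exp (snd x))"
    by (simp_all add: add_pos_pos)
  then have "0 < exp (exp (snd x)) - r2" "0 < exp (exp (fst x) + exp (snd x)) - r1"
    using r by linarith+
  then have "0 < k" unfolding k_def by (intro divide_pos_pos mult_pos_pos) simp_all
  moreover have "Phi2_kernel (of_real \<sigma>1) (of_real \<sigma>2) a z1 z2 x = of_real k"
    unfolding Phi2_kernel_def k_def r by (simp add: exp_of_real_mult_of_real exp_of_real)
  ultimately show "Phi2_kernel (of_real \<sigma>1) (of_real \<sigma>2) a z1 z2 x = of_real (Re (Phi2_kernel (of_real \<sigma>1) (of_real \<sigma>2) a z1 z2 x))"
    and "0 < Re (Phi2_kernel (of_real \<sigma>1) (of_real \<sigma>2) a z1 z2 x)" by simp_all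
qed

lemma integral_pos_of_pos:
  fixes k :: "'a \<Rightarrow> real"
  assumes k: "integrable M k" "\<And>x. 0 < k x" and M: "emeasure M (space M) \<noteq> 0"
  shows "0 < integral\<^sup>L M k"
proof -
  have "0 \<le> integral\<^sup>L M k" using k by (intro integral_nonneg_AE) (auto intro: less_imp_le)
  moreover have "integral\<^sup>L M k \<noteq> 0"
  proof
    assume "integral\<^sup>L M k = 0"
    then have "AE x in M. k x = 0"
      using k by (subst (asm) integral_nonneg_eq_0_iff_AE) (auto intro: less_imp_le)
    then have "AE x in M. False"
      by (rule eventually_mono) (use k(2) in \<open>auto simp: less_le\<close>)
    then have "ae_filter M = bot" using trivial_limit_def by blast
    with M show False by (simp add: ae_filter_eq_bot_iff)
  qed
  ultimately show ?thesis by simp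
qed

lemma prob_space_density_normalized:
  fixes k :: "'a \<Rightarrow> real"
  assumes k: "integrable M k" "\<And>x. 0 \<le> k x" "0 < integral\<^sup>L M k"
  shows "prob_space (density M (\<lambda>x. ennreal (k x / integral\<^sup>L M k)))"
proof (rule prob_spaceI)
  have "(\<integral>\<^sup>+x. ennreal (k x / integral\<^sup>L M k) \<partial>M) = ennreal (\<integral>x. k x / integral\<^sup>L M k \<partial>M)"
    using k by (intro nn_integral_eq_integral) auto
  with k show "emeasure (density M (\<lambda>x. ennreal (k x / integral\<^sup>L M k)))
      (space (density M (\<lambda>x. ennreal (k x / integral\<^sup>L M k)))) = 1"
    using borel_measurable_integrable[OF k(1)] by (simp add: emeasure_density)
qed

lemma char2_density:
  assumes [measurable]: "p \<in> borel_measurable borel" and "\<And>x. 0 \<le> p x"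
  shows "char2 (density lborel (\<lambda>x. ennreal (p x))) t1 t2 =
    (\<integral>x. of_real (p x) * cis (t1 * fst x + t2 * snd x) \<partial>lborel)"
proof -
  have "(\<lambda>x::real \<times> real. cis (t1 * fst x + t2 * snd x)) \<in> borel_measurable borel"
    by (intro borel_measurable_continuous_onI continuous_intros)
  then show ?thesis
    unfolding char2_def using assms by (subst integral_density) (auto simp: scaleR_conv_of_real)
qed

lemma P_dens_density:
  assumes a: "0 < a" and z: "z1 \<in> \<real>" "z2 \<in> \<real>" "norm z1 \<le> 1" "norm z2 \<le> 1"
    and \<sigma>: "0 < \<sigma>1" "1 < \<sigma>2" "2 < \<sigma>1 + \<sigma>2"
  shows "(\<forall>x. P_dens \<sigma>1 \<sigma>2 a z1 z2 x \<in> \<real> \<and> 0 \<le> Re (P_dens \<sigma>1 \<sigma>2 a z1 z2 x)) \<and>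
    prob_space (density lborel (\<lambda>x. ennreal (Re (P_dens \<sigma>1 \<sigma>2 a z1 z2 x)))) \<and>
    (\<forall>t1 t2. F_fun \<sigma>1 \<sigma>2 a z1 z2 t1 t2 =
      char2 (density lborel (\<lambda>x. ennreal (Re (P_dens \<sigma>1 \<sigma>2 a z1 z2 x)))) t1 t2)"
proof -
  define k where "k x = Re (Phi2_kernel (of_real \<sigma>1) (of_real \<sigma>2) a z1 z2 x)" for x
  have kernel_eq: "Phi2_kernel (of_real \<sigma>1) (of_real \<sigma>2) a z1 z2 x = of_real (k x)"
    and k_pos: "0 < k x" for x
    unfolding k_def using Phi2_kernel_real_pos[OF z] by blast+
  have f_eq: "f_fun \<sigma>1 \<sigma>2 a z1 z2 t1 t2 = (\<integral>x. of_real (k x) * cis (t1 * fst x + t2 * snd x) \<partial>lborel)"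
    for t1 t2 using f_fun_eq_integral[OF a z(3,4) \<sigma>] by (simp add: kernel_eq)
  have "integrable lborel (\<lambda>x. complex_of_real (k x))"
    using integrable_Phi2_kernel_cis[OF a z(3,4) \<sigma>, of 0 0] by (simp add: kernel_eq)
  then have k_int: "integrable lborel k" by (simp only: complex_of_real_integrable_eq)
  define F0 where "F0 = integral\<^sup>L lborel k"
  have f0: "f_fun \<sigma>1 \<sigma>2 a z1 z2 0 0 = of_real F0"
    using f_eq[of 0 0] by (simp add: F0_def)
  have "0 < F0"
    unfolding F0_def by (rule integral_pos_of_pos[OF k_int k_pos]) simp
  have P: "P_dens \<sigma>1 \<sigma>2 a z1 z2 x = of_real (k x / F0)" for x
    by (simp add: P_dens_eq_Phi2_kernel kernel_eq f0)
  have "char2 (density lborel (\<lambda>x. ennreal (k x / F0))) t1 t2 = F_fun \<sigma>1 \<sigma>2 a z1 z2 t1 t2" for t1 t2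
  proof -
    have "char2 (density lborel (\<lambda>x. ennreal (k x / F0))) t1 t2 =
        (\<integral>x. of_real (k x) * cis (t1 * fst x + t2 * snd x) / of_real F0 \<partial>lborel)"
      using k_int k_pos \<open>0 < F0\<close> by (subst char2_density) (auto simp: less_imp_le)
    also have "\<dots> = F_fun \<sigma>1 \<sigma>2 a z1 z2 t1 t2"
      by (simp add: F_fun_def f_eq f0 F0_def)
    finally show ?thesis .
  qed
  moreover have "prob_space (density lborel (\<lambda>x. ennreal (k x / F0)))"
    unfolding F0_def using k_int k_pos \<open>0 < F0\<close>
    by (intro prob_space_density_normalized) (auto simp: less_imp_le F0_def)
  moreover have "P_dens \<sigma>1 \<sigma>2 a z1 z2 x \<in> \<real> \<and> 0 \<le> Re (P_dens \<sigma>1 \<sigma>2 a z1 z2 x)" for x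
    using k_pos \<open>0 < F0\<close> by (simp add: P less_imp_le)
  ultimately show ?thesis by (simp add: P)
qed

lemma char2_zero: "prob_space M \<Longrightarrow> char2 M 0 0 = 1"
  by (simp add: char2_def prob_space.prob_space)

lemma char2_uminus: "char2 M (- t1) (- t2) = cnj (char2 M t1 t2)"
proof -
  have "char2 M (- t1) (- t2) = (CLINT x|M. cnj (cis (t1 * fst x + t2 * snd x)))"
    unfolding char2_def cis_cnj by (simp add: algebra_simps)
  then show ?thesis by (simp only: Bochner_Integration.integral_cnj char2_def)
qed

lemma Gamma_nonzero_Re_pos: "0 < Re z \<Longrightarrow> Gamma z \<noteq> 0"
  by (rule Gamma_nonzero) (auto elim!: nonpos_Ints_cases)

lemma cnj_f_fun:
  assumes "0 < a" "norm z1 \<le> 1" "norm z2 \<le> 1" "0 < \<sigma>1" "1 < \<sigma>2" "2 < \<sigma>1 + \<sigma>2"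
  shows "cnj (f_fun \<sigma>1 \<sigma>2 a z1 z2 t1 t2) = f_fun \<sigma>1 \<sigma>2 a (cnj z1) (cnj z2) (- t1) (- t2)"
  using cnj_Phi2[of a z1 z2 "Complex \<sigma>1 t1" "Complex \<sigma>2 t2"] assms
  by (simp add: f_fun_def cnj_Gamma complex_cnj)

lemma Phi2_conj_identity:
  assumes a: "0 < a" and z: "norm z1 \<le> 1" "norm z2 \<le> 1" and \<sigma>: "0 < \<sigma>1" "1 < \<sigma>2" "2 < \<sigma>1 + \<sigma>2"
    and char: "is_char_fun2 (F_fun \<sigma>1 \<sigma>2 a z1 z2)"
  shows "Phi2 (of_real \<sigma>1) (Complex \<sigma>2 \<tau>) a z1 z2 * Phi2 (of_real \<sigma>1) (Complex \<sigma>2 0) a (cnj z1) (cnj z2) =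
    Phi2 (of_real \<sigma>1) (Complex \<sigma>2 \<tau>) a (cnj z1) (cnj z2) * Phi2 (of_real \<sigma>1) (Complex \<sigma>2 0) a z1 z2"
proof -
  obtain M where M: "prob_space M" and F_eq: "\<And>t1 t2. F_fun \<sigma>1 \<sigma>2 a z1 z2 t1 t2 = char2 M t1 t2"
    using char unfolding is_char_fun2_def by blast
  define f g where "f = f_fun \<sigma>1 \<sigma>2 a z1 z2" and "g = f_fun \<sigma>1 \<sigma>2 a (cnj z1) (cnj z2)"
  note cnj_f = cnj_f_fun[OF a z \<sigma>, folded f_def g_def]
  have "f 0 0 \<noteq> 0"
    using F_eq[of 0 0] char2_zero[OF M] by (auto simp: F_fun_def f_def)
  moreover have "g 0 0 = cnj (f 0 0)" using cnj_f[of 0 0] by simp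
  moreover have "f 0 \<tau> / f 0 0 = g 0 \<tau> / g 0 0"
  proof -
    have "f 0 \<tau> / f 0 0 = cnj (f 0 (- \<tau>) / f 0 0)"
      using F_eq[of 0 \<tau>] F_eq[of 0 "- \<tau>"] char2_uminus[of M 0 "- \<tau>"] by (simp add: F_fun_def f_def)
    then show ?thesis using cnj_f[of 0 "- \<tau>"] cnj_f[of 0 0] by simp
  qed
  ultimately have "f 0 \<tau> * g 0 0 = g 0 \<tau> * f 0 0"
    by (simp add: field_simps)
  moreover have "Gamma (Complex \<sigma>1 0) * Gamma (Complex \<sigma>2 \<tau>) * (Gamma (Complex \<sigma>1 0) * Gamma (Complex \<sigma>2 0)) \<noteq> 0"
    using \<sigma> by (simp add: Gamma_nonzero_Re_pos)
  ultimately show ?thesis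
    by (simp add: f_def g_def f_fun_def complex_of_real_def mult_ac)
qed

lemma suminf_double_split_low_terms:
  fixes t :: "nat \<Rightarrow> nat \<Rightarrow> 'a::real_normed_vector"
  assumes row: "\<And>m. summable (t m)"
    and rows: "summable (\<lambda>m. \<Sum>n. if m + n < 2 then 0 else t m n)"
  shows "(\<Sum>m. \<Sum>n. t m n) = t 0 0 + t 0 1 + t 1 0 + (\<Sum>m. \<Sum>n. if m + n < 2 then 0 else t m n)"
proof -
  define tail where "tail m n = (if m + n < 2 then 0 else t m n)" for m n
  have head_sums: "(\<lambda>n. t m n - tail m n) sums (\<Sum>n<2 - m. t m n)" for m
  proof -
    have "(\<lambda>n. t m n - tail m n) sums (\<Sum>n<2 - m. t m n - tail m n)"
      by (rule sums_finite) (auto simp: tail_def)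
    moreover have "(\<Sum>n<2 - m. t m n - tail m n) = (\<Sum>n<2 - m. t m n)"
      by (intro sum.cong) (auto simp: tail_def)
    ultimately show ?thesis by simp
  qed
  have row_split: "(\<Sum>n. t m n) = (\<Sum>n<2 - m. t m n) + (\<Sum>n. tail m n)" for m
  proof -
    have "summable (\<lambda>n. t m n - (t m n - tail m n))"
      by (rule summable_diff[OF row sums_summable[OF head_sums]])
    then have "summable (tail m)" by simp
    then show ?thesis
      using suminf_diff[OF row[of m] \<open>summable (tail m)\<close>] sums_unique[OF head_sums[of m]]
      by (simp add: diff_eq_eq)
  qed
  have head: "(\<lambda>m. \<Sum>n<2 - m. t m n) sums (t 0 0 + t 0 1 + t 1 0)"
    using sums_finite[of "{..<2}" "\<lambda>m. \<Sum>n<2 - m. t m n"] by (simp add: numeral_2_eq_2)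
  show ?thesis
    using suminf_add[OF sums_summable[OF head] rows[folded tail_def]] sums_unique[OF head]
    by (simp add: row_split tail_def)
qed

lemma norm_Phi2_term_le_far:
  assumes a: "0 < a" and z: "norm z1 \<le> 1" "norm z2 \<le> 1" and s: "2 \<le> Re s" and mn: "2 \<le> m + n"
  shows "norm (Phi2_term s1 s a z1 z2 m n) \<le>
    (3 + a) powr (2 - Re s) * ((real m + a) powr - Re s1 * (real m + real (Suc n) + a) powr - 2)"
proof -
  define d where "d = real m + real (Suc n) + a"
  have "3 + a \<le> d" using mn by (simp add: d_def)
  then have "d powr (2 - Re s) \<le> (3 + a) powr (2 - Re s)"
    using a s by (intro powr_mono2') auto
  then have "d powr (2 - Re s) * d powr - 2 \<le> (3 + a) powr (2 - Re s) * d powr - 2"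
    by (rule mult_right_mono) simp
  then have "d powr - Re s \<le> (3 + a) powr (2 - Re s) * d powr - 2"
    using a by (simp add: d_def flip: powr_add)
  then have "(real m + a) powr - Re s1 * d powr - Re s \<le>
      (real m + a) powr - Re s1 * ((3 + a) powr (2 - Re s) * d powr - 2)"
    by (rule mult_left_mono) simp
  then show ?thesis
    using norm_Phi2_term_le[OF a z, of s1 s m n] by (simp add: d_def mult_ac)
qed

lemma Phi2_minus_leading_terms_bound:
  assumes a: "0 < a" and z: "norm z1 \<le> 1" "norm z2 \<le> 1" and \<sigma>1: "0 < \<sigma>1"
  obtains C where "\<And>s. 2 \<le> Re s \<Longrightarrow>
    norm (Phi2 (of_real \<sigma>1) s a z1 z2 - Phi2_term (of_real \<sigma>1) s a z1 z2 0 0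
      - Phi2_term (of_real \<sigma>1) s a z1 z2 0 1 - Phi2_term (of_real \<sigma>1) s a z1 z2 1 0)
    \<le> C * (3 + a) powr - Re s"
proof
  define b where "b m n = (real m + a) powr - \<sigma>1 * (real m + real (Suc n) + a) powr - 2" for m n
  have b_row: "summable (b m)" for m
    unfolding b_def[abs_def] by (rule summable_Phi2_majorant_row) (use a \<sigma>1 in auto)
  have b_rows: "summable (\<lambda>m. \<Sum>n. b m n)"
    unfolding b_def by (rule summable_Phi2_majorant) (use a \<sigma>1 in auto)
  fix s :: complex assume s: "2 \<le> Re s"
  define t where "t = Phi2_term (of_real \<sigma>1) s a z1 z2"
  define K where "K = (3 + a) powr (2 - Re s)"
  define tail where "tail m n = (if m + n < 2 then 0 else t m n)" for m n
  have abs_conv: "0 < Re (of_real \<sigma>1)" "1 < Re s" "2 < Re (of_real \<sigma>1) + Re s"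
    using \<sigma>1 s by auto
  have tail_le: "norm (tail m n) \<le> K * b m n" for m n
    using norm_Phi2_term_le_far[OF a z s, of m n "of_real \<sigma>1"]
    by (simp add: tail_def t_def K_def b_def)
  have Kb_rows: "summable (\<lambda>m. \<Sum>n. K * b m n)"
    unfolding suminf_mult[OF b_row] by (rule summable_mult[OF b_rows])
  note tail_double = summable_double_suminf norm_double_suminf_le
  note tail_double = tail_double[OF tail_le summable_mult[OF b_row] Kb_rows]
  have "Phi2 (of_real \<sigma>1) s a z1 z2 - t 0 0 - t 0 1 - t 1 0 = (\<Sum>m. \<Sum>n. tail m n)"
    using suminf_double_split_low_terms[of t] tail_double(1)
      summable_norm_cancel[OF summable_norm_Phi2_term[OF a z abs_conv]]
    by (simp add: Phi2_eq_double_suminf[OF a z abs_conv] t_def tail_def)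
  also have "norm \<dots> \<le> K * (\<Sum>m. \<Sum>n. b m n)"
    using tail_double(2) by (simp only: suminf_mult[OF b_row] suminf_mult[OF b_rows])
  also have "\<dots> = (3 + a) powr 2 * (\<Sum>m. \<Sum>n. b m n) * (3 + a) powr - Re s"
    by (simp add: K_def powr_diff powr_minus divide_inverse)
  finally show "norm (Phi2 (of_real \<sigma>1) s a z1 z2 - Phi2_term (of_real \<sigma>1) s a z1 z2 0 0
      - Phi2_term (of_real \<sigma>1) s a z1 z2 0 1 - Phi2_term (of_real \<sigma>1) s a z1 z2 1 0)
    \<le> (3 + a) powr 2 * (\<Sum>m. \<Sum>n. b m n) * (3 + a) powr - Re s"
    unfolding t_def .
qed

lemma
  assumes "0 < a"
  shows Phi2_term_0_0: "Phi2_term (of_real \<sigma>1) s a z1 z2 0 0 = of_real (a powr - \<sigma>1) / of_real (1 + a) powr s"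
    and Phi2_term_0_1: "Phi2_term (of_real \<sigma>1) s a z1 z2 0 1 = z2 * of_real (a powr - \<sigma>1) / of_real (2 + a) powr s"
    and Phi2_term_1_0: "Phi2_term (of_real \<sigma>1) s a z1 z2 1 0 = z1 * of_real ((1 + a) powr - \<sigma>1) / of_real (2 + a) powr s"
  using assms by (simp_all add: Phi2_term_def powr_of_real powr_minus divide_inverse add_ac del: of_real_add)

definition Phi2_remainder :: "real \<Rightarrow> real \<Rightarrow> complex \<Rightarrow> complex \<Rightarrow> complex \<Rightarrow> complex" where
  "Phi2_remainder \<sigma>1 a z1 z2 s = of_real (2 + a) powr s * Phi2 (of_real \<sigma>1) s a z1 z2
     - of_real (a powr - \<sigma>1) * of_real ((2 + a) / (1 + a)) powr s"

lemma powr_of_real_nonzero: "0 < x \<Longrightarrow> complex_of_real x powr s \<noteq> 0"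
  by (simp add: powr_of_real_pos)

lemma Phi2_remainder_minus_eq:
  assumes a: "0 < a"
  shows "Phi2_remainder \<sigma>1 a z1 z2 s - (z2 * of_real (a powr - \<sigma>1) + z1 * of_real ((1 + a) powr - \<sigma>1)) =
    of_real (2 + a) powr s * (Phi2 (of_real \<sigma>1) s a z1 z2 - Phi2_term (of_real \<sigma>1) s a z1 z2 0 0
      - Phi2_term (of_real \<sigma>1) s a z1 z2 0 1 - Phi2_term (of_real \<sigma>1) s a z1 z2 1 0)"
proof -
  define E R P where "E = complex_of_real (2 + a) powr s"
    and "R = complex_of_real ((2 + a) / (1 + a)) powr s" and "P = complex_of_real (1 + a) powr s"
  define A B where "A = complex_of_real (a powr - \<sigma>1)" and "B = complex_of_real ((1 + a) powr - \<sigma>1)"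
  have "(2 + a) / (1 + a) * (1 + a) = 2 + a" using a by simp
  then have "E = (complex_of_real ((2 + a) / (1 + a)) * of_real (1 + a)) powr s"
    unfolding E_def by (simp only: of_real_mult[symmetric])
  also have "\<dots> = R * P"
    unfolding R_def P_def using a by (intro powr_times_real) auto
  finally have "E = R * P" .
  moreover have "P \<noteq> 0" "E \<noteq> 0"
    unfolding E_def P_def using a by (simp_all add: powr_of_real_nonzero del: of_real_add)
  ultimately have "E * Phi2 (of_real \<sigma>1) s a z1 z2 - A * R - (z2 * A + z1 * B) =
      E * (Phi2 (of_real \<sigma>1) s a z1 z2 - A / P - z2 * A / E - z1 * B / E)"
    by (simp add: field_simps)
  then show ?thesis
    unfolding Phi2_remainder_def Phi2_term_0_0[OF a] Phi2_term_0_1[OF a] Phi2_term_1_0[OF a]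
    by (simp only: E_def R_def P_def A_def B_def)
qed

lemma tendsto_Phi2_remainder:
  assumes a: "0 < a" and z: "norm z1 \<le> 1" "norm z2 \<le> 1" and \<sigma>1: "0 < \<sigma>1"
  shows "(\<lambda>n. Phi2_remainder \<sigma>1 a z1 z2 (Complex (real n + 2) t))
    \<longlonglongrightarrow> z2 * of_real (a powr - \<sigma>1) + z1 * of_real ((1 + a) powr - \<sigma>1)"
    (is "?L \<longlonglongrightarrow> ?c")
proof -
  obtain C where C: "\<And>s. 2 \<le> Re s \<Longrightarrow>
      norm (Phi2 (of_real \<sigma>1) s a z1 z2 - Phi2_term (of_real \<sigma>1) s a z1 z2 0 0
        - Phi2_term (of_real \<sigma>1) s a z1 z2 0 1 - Phi2_term (of_real \<sigma>1) s a z1 z2 1 0)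
      \<le> C * (3 + a) powr - Re s"
    using Phi2_minus_leading_terms_bound[OF a z \<sigma>1] by blast
  define \<theta> where "\<theta> = (2 + a) / (3 + a)"
  have \<theta>: "0 < \<theta>" "\<theta> < 1" using a by (simp_all add: \<theta>_def)
  have bound: "norm (?L n - ?c) \<le> C * \<theta> ^ 2 * \<theta> ^ n" for n
  proof -
    define s where "s = Complex (real n + 2) t"
    have "norm (?L n - ?c) \<le> (2 + a) powr (real n + 2) * (C * (3 + a) powr - (real n + 2))"
      unfolding s_def[symmetric] Phi2_remainder_minus_eq[OF a] norm_mult
      using a C[of s] norm_powr_of_real[of "2 + a" s] by (intro mult_mono) (auto simp: s_def)
    also have "\<dots> = C * \<theta> powr (real n + 2)"
    proof -
      have "\<theta> powr (real n + 2) = (2 + a) powr (real n + 2) / (3 + a) powr (real n + 2)"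
        unfolding \<theta>_def by (rule powr_divide)
      moreover have "(3 + a) powr - (real n + 2) = inverse ((3 + a) powr (real n + 2))"
        by (rule powr_minus)
      ultimately show ?thesis by (simp add: divide_inverse)
    qed
    also have "\<dots> = C * \<theta> ^ 2 * \<theta> ^ n"
      using \<theta> by (simp add: powr_add powr_realpow)
    finally show ?thesis .
  qed
  have "(\<lambda>n. C * \<theta> ^ 2 * \<theta> ^ n) \<longlonglongrightarrow> C * \<theta> ^ 2 * 0"
    using \<theta> by (intro tendsto_mult tendsto_const LIMSEQ_power_zero) simp
  then have "(\<lambda>n. C * \<theta> ^ 2 * \<theta> ^ n) \<longlonglongrightarrow> 0" by simp
  moreover have "eventually (\<lambda>n. norm (?L n - ?c) \<le> C * \<theta> ^ 2 * \<theta> ^ n) sequentially"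
    using bound by (intro always_eventually allI)
  ultimately have "(\<lambda>n. ?L n - ?c) \<longlonglongrightarrow> 0"
    by (rule Lim_null_comparison[rotated])
  then show ?thesis by (simp only: LIM_zero_iff)
qed

lemma powr_of_real_Complex:
  "0 < \<rho> \<Longrightarrow> complex_of_real \<rho> powr Complex \<sigma> t = of_real (exp (\<sigma> * ln \<rho>)) * cis (t * ln \<rho>)"
  by (simp add: powr_of_real_pos exp_Complex_mult_of_real)

text \<open>With \<open>\<rho>\<^sup>s = -R\<close> at \<open>s\<close> and \<open>\<rho>\<^sup>t = R\<close> at \<open>t\<close>, the leading terms \<open>A\<^sup>2 \<rho>\<^sup>s \<rho>\<^sup>t\<close> cancel from the identity.\<close>
lemma Phi2_remainder_cross_identity:
  fixes s t w1 w2 w1' w2' :: complex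
  assumes a: "0 < a"
    and ident: "Phi2 (of_real \<sigma>1) s a w1 w2 * Phi2 (of_real \<sigma>1) t a w1' w2' =
      Phi2 (of_real \<sigma>1) s a w1' w2' * Phi2 (of_real \<sigma>1) t a w1 w2"
    and \<rho>: "of_real ((2 + a) / (1 + a)) powr s = - R" "of_real ((2 + a) / (1 + a)) powr t = R" and "R \<noteq> 0"
  shows "of_real (a powr - \<sigma>1) * (Phi2_remainder \<sigma>1 a w1 w2 s + Phi2_remainder \<sigma>1 a w1 w2 t
      - Phi2_remainder \<sigma>1 a w1' w2' s - Phi2_remainder \<sigma>1 a w1' w2' t) =
    (Phi2_remainder \<sigma>1 a w1' w2' s * Phi2_remainder \<sigma>1 a w1 w2 t
      - Phi2_remainder \<sigma>1 a w1 w2 s * Phi2_remainder \<sigma>1 a w1' w2' t) / R"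
proof -
  define A where "A = complex_of_real (a powr - \<sigma>1)"
  define L where "L w1 w2 s = Phi2_remainder \<sigma>1 a w1 w2 s" for w1 w2 s
  have Phi2_eq: "Phi2 (of_real \<sigma>1) s a w1 w2 = (A * of_real ((2 + a) / (1 + a)) powr s + L w1 w2 s) /
      of_real (2 + a) powr s" for w1 w2 s
    using a powr_of_real_nonzero[of "2 + a" s] by (simp add: L_def A_def Phi2_remainder_def field_simps)
  have "(A * - R + L w1 w2 s) * (A * R + L w1' w2' t) = (A * - R + L w1' w2' s) * (A * R + L w1 w2 t)"
    using ident a powr_of_real_nonzero[of "2 + a" s] powr_of_real_nonzero[of "2 + a" t]
    unfolding Phi2_eq \<rho> by (simp add: field_simps)
  then have "R * (A * (L w1 w2 s + L w1 w2 t - L w1' w2' s - L w1' w2' t)) =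
      L w1' w2' s * L w1 w2 t - L w1 w2 s * L w1' w2' t"
    by (simp add: algebra_simps)
  then show ?thesis
    using \<open>R \<noteq> 0\<close> by (simp add: L_def A_def field_simps)
qed

lemma tendsto_inverse_exp_linear:
  assumes "0 < l"
  shows "(\<lambda>n. inverse (complex_of_real (exp ((real n + 2) * l)))) \<longlonglongrightarrow> 0"
proof -
  have "inverse (complex_of_real (exp ((real n + 2) * l))) = of_real (exp (- 2 * l) * exp (- l) ^ n)" for n
  proof -
    have "exp (- 2 * l) * exp (- l) ^ n = exp (- ((real n + 2) * l))"
      by (simp add: exp_of_nat_mult[symmetric] exp_add[symmetric] algebra_simps)
    then show ?thesis by (simp add: exp_minus)
  qed
  moreover have "(\<lambda>n. complex_of_real (exp (- 2 * l) * exp (- l) ^ n)) \<longlonglongrightarrow> of_real (exp (- 2 * l) * 0)"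
    using assms by (intro tendsto_of_real tendsto_mult tendsto_const LIMSEQ_power_zero) simp
  ultimately show ?thesis by simp
qed

text \<open>Along \<open>Im s = \<pi> / ln \<rho>\<close> and \<open>Im s = 0\<close>, with \<open>\<rho> = (2 + a) / (1 + a)\<close>, the factor \<open>\<rho>\<^sup>s\<close> equals
  \<open>-R\<close> and \<open>R\<close> with \<open>R \<rightarrow> \<infinity>\<close>; the cross identity then tends to \<open>4 A (c - cnj c) = 0\<close>.\<close>
lemma Im_Phi2_second_coefficient_eq_0:
  assumes a: "0 < a" and z: "norm z1 \<le> 1" "norm z2 \<le> 1" and \<sigma>1: "0 < \<sigma>1"
    and ident: "\<And>\<sigma>2 \<tau>. 2 \<le> \<sigma>2 \<Longrightarrow>
      Phi2 (of_real \<sigma>1) (Complex \<sigma>2 \<tau>) a z1 z2 * Phi2 (of_real \<sigma>1) (Complex \<sigma>2 0) a (cnj z1) (cnj z2) =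
      Phi2 (of_real \<sigma>1) (Complex \<sigma>2 \<tau>) a (cnj z1) (cnj z2) * Phi2 (of_real \<sigma>1) (Complex \<sigma>2 0) a z1 z2"
  shows "Im z2 * a powr - \<sigma>1 + Im z1 * (1 + a) powr - \<sigma>1 = 0"
proof -
  define A where "A = complex_of_real (a powr - \<sigma>1)"
  define l where "l = ln ((2 + a) / (1 + a))"
  have "0 < l" using a by (simp add: l_def)
  define L where "L w1 w2 s = Phi2_remainder \<sigma>1 a w1 w2 s" for w1 w2 s
  define c :: "complex \<Rightarrow> complex \<Rightarrow> complex"
    where "c w1 w2 = w2 * of_real (a powr - \<sigma>1) + w1 * of_real ((1 + a) powr - \<sigma>1)" for w1 w2
  define R where "R n = complex_of_real (exp ((real n + 2) * l))" for n :: nat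
  define sn on where "sn n = Complex (real n + 2) (pi / l)" and "on n = Complex (real n + 2) 0" for n :: nat
  have "0 < (2 + a) / (1 + a)" using a by simp
  have \<rho>_sn: "complex_of_real ((2 + a) / (1 + a)) powr sn n = - R n"
    and \<rho>_on: "complex_of_real ((2 + a) / (1 + a)) powr on n = R n" for n
    unfolding sn_def on_def R_def powr_of_real_Complex[OF \<open>0 < (2 + a) / (1 + a)\<close>] l_def[symmetric]
    using \<open>0 < l\<close> by simp_all
  have key: "A * (L z1 z2 (sn n) + L z1 z2 (on n) - L (cnj z1) (cnj z2) (sn n) - L (cnj z1) (cnj z2) (on n)) =
      (L (cnj z1) (cnj z2) (sn n) * L z1 z2 (on n) - L z1 z2 (sn n) * L (cnj z1) (cnj z2) (on n)) / R n" for n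
    unfolding A_def L_def
  proof (rule Phi2_remainder_cross_identity[OF a])
    show "Phi2 (of_real \<sigma>1) (sn n) a z1 z2 * Phi2 (of_real \<sigma>1) (on n) a (cnj z1) (cnj z2) =
        Phi2 (of_real \<sigma>1) (sn n) a (cnj z1) (cnj z2) * Phi2 (of_real \<sigma>1) (on n) a z1 z2"
      unfolding sn_def on_def by (rule ident) simp
  qed (fact \<rho>_sn, fact \<rho>_on, simp add: R_def)
  have R_inverse: "(\<lambda>n. inverse (R n)) \<longlonglongrightarrow> 0"
    unfolding R_def by (rule tendsto_inverse_exp_linear[OF \<open>0 < l\<close>])
  have lims: "(\<lambda>n. L z1 z2 (sn n)) \<longlonglongrightarrow> c z1 z2" "(\<lambda>n. L z1 z2 (on n)) \<longlonglongrightarrow> c z1 z2"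
    "(\<lambda>n. L (cnj z1) (cnj z2) (sn n)) \<longlonglongrightarrow> c (cnj z1) (cnj z2)"
    "(\<lambda>n. L (cnj z1) (cnj z2) (on n)) \<longlonglongrightarrow> c (cnj z1) (cnj z2)"
    unfolding sn_def on_def L_def c_def using z by (auto intro!: tendsto_Phi2_remainder[OF a _ _ \<sigma>1])
  have "(\<lambda>n. A * (L z1 z2 (sn n) + L z1 z2 (on n) - L (cnj z1) (cnj z2) (sn n) - L (cnj z1) (cnj z2) (on n)))
      \<longlonglongrightarrow> A * (c z1 z2 + c z1 z2 - c (cnj z1) (cnj z2) - c (cnj z1) (cnj z2))"
    by (intro tendsto_intros lims)
  moreover have "(\<lambda>n. A * (L z1 z2 (sn n) + L z1 z2 (on n) - L (cnj z1) (cnj z2) (sn n) - L (cnj z1) (cnj z2) (on n)))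
      \<longlonglongrightarrow> (c (cnj z1) (cnj z2) * c z1 z2 - c z1 z2 * c (cnj z1) (cnj z2)) * 0"
    unfolding key divide_inverse by (intro tendsto_intros lims R_inverse)
  ultimately have "A * (2 * (c z1 z2 - c (cnj z1) (cnj z2))) = 0"
    by (auto dest: LIMSEQ_unique simp: algebra_simps)
  moreover have "A \<noteq> 0" using a by (simp add: A_def)
  ultimately have "c z1 z2 = c (cnj z1) (cnj z2)" by simp
  also have "\<dots> = cnj (c z1 z2)" by (simp add: c_def)
  finally have "Im (c z1 z2) = 0" by (simp add: complex_eq_iff)
  then show ?thesis by (simp add: c_def)
qed

lemma eq_0_of_power_sums_eq_0:
  fixes x y u v :: real
  assumes "0 < u" "0 < v" "u \<noteq> v"
    and "x / u ^ 2 + y / v ^ 2 = 0" "x / u ^ 3 + y / v ^ 3 = 0"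
  shows "x = 0" and "y = 0"
proof -
  have sq: "x * v ^ 2 = - (y * u ^ 2)" and cube: "x * v ^ 3 + y * u ^ 3 = 0"
    using assms by (simp_all add: field_simps)
  have "x * v ^ 3 = - (y * u ^ 2) * v"
    using sq by (simp add: power3_eq_cube power2_eq_square mult_ac)
  with cube have "y * u ^ 2 * (u - v) = 0"
    by (simp add: algebra_simps power3_eq_cube power2_eq_square)
  then show "y = 0" using assms by simp
  then show "x = 0" using sq assms by simp
qed

lemma Reals_of_is_char_fun2:
  assumes a: "0 < a" and z: "norm z1 \<le> 1" "norm z2 \<le> 1"
    and char: "\<And>\<sigma>1 \<sigma>2. 0 < \<sigma>1 \<Longrightarrow> 1 < \<sigma>2 \<Longrightarrow> 2 < \<sigma>1 + \<sigma>2 \<Longrightarrow> is_char_fun2 (F_fun \<sigma>1 \<sigma>2 a z1 z2)"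
  shows "z1 \<in> \<real>" "z2 \<in> \<real>"
proof -
  have Im_eq: "Im z2 * a powr - \<sigma>1 + Im z1 * (1 + a) powr - \<sigma>1 = 0" if "\<sigma>1 = 2 \<or> \<sigma>1 = 3" for \<sigma>1 :: real
    using that by (intro Im_Phi2_second_coefficient_eq_0[OF a z] Phi2_conj_identity[OF a z] char) auto
  have "Im z1 = 0" "Im z2 = 0"
    using eq_0_of_power_sums_eq_0[where u = a and v = "1 + a" and x = "Im z2" and y = "Im z1"] Im_eq[of 2] Im_eq[of 3] a
    by (simp_all add: powr_minus divide_inverse)
  then show "z1 \<in> \<real>" "z2 \<in> \<real>" by (simp_all add: complex_is_Real_iff)
qed

lemma is_char_fun2_of_Reals:
  assumes "0 < a" "z1 \<in> \<real>" "z2 \<in> \<real>" "norm z1 \<le> 1" "norm z2 \<le> 1"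
    and "0 < \<sigma>1" "1 < \<sigma>2" "2 < \<sigma>1 + \<sigma>2"
  shows "is_char_fun2 (F_fun \<sigma>1 \<sigma>2 a z1 z2)"
  unfolding is_char_fun2_def using P_dens_density[OF assms] by (metis sets_density sets_lborel)

theorem theorem2p4:
  fixes a :: real and z1 z2 :: complex
  assumes "0 < a" and "a \<le> 1"
    and "0 < cmod z1" and "cmod z1 \<le> 1" and "0 < cmod z2" and "cmod z2 \<le> 1"
  shows "((\<forall>\<sigma>1 \<sigma>2. 0 < \<sigma>1 \<and> 1 < \<sigma>2 \<and> 2 < \<sigma>1 + \<sigma>2 \<longrightarrow>
             is_char_fun2 (F_fun \<sigma>1 \<sigma>2 a z1 z2))
          \<longleftrightarrow> (z1 \<in> \<real> \<and> z2 \<in> \<real>))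
       \<and> (z1 \<in> \<real> \<and> z2 \<in> \<real> \<longrightarrow>
          (\<forall>\<sigma>1 \<sigma>2. 0 < \<sigma>1 \<and> 1 < \<sigma>2 \<and> 2 < \<sigma>1 + \<sigma>2 \<longrightarrow>
             (\<forall>x. P_dens \<sigma>1 \<sigma>2 a z1 z2 x \<in> \<real> \<and> 0 \<le> Re (P_dens \<sigma>1 \<sigma>2 a z1 z2 x)) \<and>
             prob_space (density lborel (\<lambda>x. ennreal (Re (P_dens \<sigma>1 \<sigma>2 a z1 z2 x)))) \<and>
             (\<forall>t1 t2. F_fun \<sigma>1 \<sigma>2 a z1 z2 t1 t2 =
                char2 (density lborel (\<lambda>x. ennreal (Re (P_dens \<sigma>1 \<sigma>2 a z1 z2 x)))) t1 t2)))"
proof -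
  note a = assms(1) and z = assms(4,6)
  show ?thesis
    using P_dens_density[OF a _ _ z] is_char_fun2_of_Reals[OF a _ _ z] Reals_of_is_char_fun2[OF a z]
    by blast
qed

end
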